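(* Let $N\ge1$, $T>0$, $\sigma>0$, $\lambda>0$, $\kappa>0$, let the cost function be $g(z)=\kappa z$, and let all $N$ players be risk neutral with claims $H^j\in\mathcal{C}^2_b(\mathbb{R})$ satisfying $\sum_{i=1}^N H^i=0$. Let $(v^1,\dots,v^N)$ be the classical solution of $$0=v^j_t+\tfrac12\sigma^2v^j_{pp}+\lambda\dot X^*\,v^j_p-\kappa\,\dot X^j\,\dot X^*,\qquad v^j(T,p)=H^j(p),\quad j=1,\dots,N,$$ with equilibrium trading speeds $\dot X^j=\frac{\lambda}{\kappa}\Big(v^j_p-\frac{1}{N+1}\sum_{i=1}^Nv^i_p\Big)$ and $\dot X^*=\sum_{i=1}^N\dot X^i=\frac{\lambda}{\kappa(N+1)}\sum_{i=1}^Nv^i_p$. Then the aggregate equilibrium trading speed vanishes identically: $\sum_{i=1}^N\dot X^i\equiv0$.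
   Context: Setting: players $j=1,\dots,N$ hold cash-settled claims $H^j(P_T)$ on a stock with price $dP_t=\sigma dB_t+\lambda\sum_i\dot X^i_t dt$, where $X^i$ is player $i$'s (absolutely continuous) holding with $X^i_0=0$, and player $j$ maximizes $\mathbb{E}[-\int_0^T\dot X^j_t\,g(\sum_i\dot X^i_t)dt+H^j(P_T)]$. The functions $v^j$ are the players' value functions and the formulas for $\dot X^j$ give the Nash equilibrium feedback trading speeds. $\mathcal{C}^2_b$ denotes functions bounded together with derivatives up to order 2. *)

theory Defs
  imports "HOL-Analysis.Analysis"
begin

definition C2b :: "(real \<Rightarrow> real) \<Rightarrow> (real \<Rightarrow> real) \<Rightarrow> (real \<Rightarrow> real) \<Rightarrow> bool" where
  "C2b H H1 H2 \<longleftrightarrow>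
     (\<forall>p. (H has_real_derivative H1 p) (at p)) \<and>
     (\<forall>p. (H1 has_real_derivative H2 p) (at p)) \<and>
     continuous_on UNIV H2 \<and>
     bounded (range H) \<and> bounded (range H1) \<and> bounded (range H2)"

definition Xdot :: "nat \<Rightarrow> real \<Rightarrow> real \<Rightarrow> (nat \<Rightarrow> real \<Rightarrow> real \<Rightarrow> real) \<Rightarrow> nat \<Rightarrow> real \<Rightarrow> real \<Rightarrow> real" where
  "Xdot N lam kap vp j t p =
     lam / kap * (vp j t p - 1 / (real N + 1) * (\<Sum>i=1..N. vp i t p))"

definition Xstar :: "nat \<Rightarrow> real \<Rightarrow> real \<Rightarrow> (nat \<Rightarrow> real \<Rightarrow> real \<Rightarrow> real) \<Rightarrow> real \<Rightarrow> real \<Rightarrow> real" where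
  "Xstar N lam kap vp t p = lam / (kap * (real N + 1)) * (\<Sum>i=1..N. vp i t p)"

end

theory Submission
  imports Defs
begin

text \<open>Summing the equations over all players, the aggregate value \<open>w = \<Sum>\<^sub>i v\<^sup>i\<close> solves the
  closed equation \<open>w\<^sub>t + \<sigma>\<^sup>2/2 w\<^sub>p\<^sub>p + a w\<^sub>p\<^sup>2 = 0\<close>, because the aggregate speed
  \<open>\<Sum>\<^sub>i X\<^sup>i = X\<^sup>*\<close> is a multiple of \<open>w\<^sub>p\<close>, and \<open>w(T) = \<Sum>\<^sub>i H\<^sup>i = 0\<close>.
  A maximum principle for bounded subsolutions of such equations, applied to \<open>w\<close> and \<open>-w\<close>,
  gives \<open>w \<equiv> 0\<close>, hence \<open>w\<^sub>p \<equiv> 0\<close> and the aggregate speed vanishes.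
  The maximum principle is proved by maximising \<open>w - \<eta>(T - t) - \<epsilon>p\<^sup>2\<close>: the penalty makes
  the maximum attained, and at an interior maximum the first and second order conditions
  contradict the subsolution inequality.\<close>

lemma DERIV_second_nonpos_at_max:
  fixes f f' :: "real \<Rightarrow> real"
  assumes max: "\<And>q. f q \<le> f p"
    and f': "\<And>q. (f has_real_derivative f' q) (at q)"
    and f'': "(f' has_real_derivative f'') (at p)"
  shows "f' p = 0" and "f'' \<le> 0"
proof -
  show crit: "f' p = 0"
    using DERIV_local_max[OF f'[of p], of 1] max by auto
  show "f'' \<le> 0"
  proof (rule ccontr)
    assume "\<not> f'' \<le> 0"
    then obtain d where d: "d > 0" "\<forall>h>0. h < d \<longrightarrow> f' p < f' (p + h)"
      using DERIV_pos_inc_right[OF f''] by force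
    obtain z where z: "p < z" "z < p + d/2" "f (p + d/2) - f p = d/2 * f' z"
      using MVT2[of p "p + d/2" f f'] f' d by auto
    have "f' z > 0"
      using d(2)[rule_format, of "z - p"] z crit by auto
    then have "0 < d/2 * f' z"
      using d by simp
    then have "f p < f (p + d/2)"
      using z(3) by linarith
    then show False
      using max[of "p + d/2"] by simp
  qed
qed

lemma DERIV_nonpos_at_left_max:
  fixes g :: "real \<Rightarrow> real"
  assumes max: "\<And>t. t \<in> {t\<^sub>0..T} \<Longrightarrow> g t \<le> g t\<^sub>0" and "t\<^sub>0 < T"
    and g': "(g has_real_derivative g') (at t\<^sub>0)"
  shows "g' \<le> 0"
proof (rule ccontr)
  assume "\<not> g' \<le> 0"
  then obtain e where e: "e > 0" "\<forall>h>0. h < e \<longrightarrow> g t\<^sub>0 < g (t\<^sub>0 + h)"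
    using DERIV_pos_inc_right[OF g'] by force
  define h where "h = min (e/2) (T - t\<^sub>0)"
  have "h > 0" "h < e" "t\<^sub>0 + h \<le> T"
    using e \<open>t\<^sub>0 < T\<close> by (auto simp: h_def)
  then show False
    using e(2) max[of "t\<^sub>0 + h"] by force
qed

lemma bounded_sum_comp:
  fixes f :: "'i \<Rightarrow> 'a \<Rightarrow> 'b::real_normed_vector"
  assumes "\<And>i. i \<in> I \<Longrightarrow> bounded (f i ` S)"
  shows "bounded ((\<lambda>x. \<Sum>i\<in>I. f i x) ` S)"
  using assms
proof (induction I rule: infinite_finite_induct)
  case (insert i I)
  then show ?case
    by (simp add: bounded_plus_comp)
qed (auto simp: image_constant_conv)

locale bounded_C12_function =
  fixes T :: real and u ut up upp :: "real \<Rightarrow> real \<Rightarrow> real"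
  assumes T_pos: "0 < T"
    and bounded: "bounded ((\<lambda>(t,p). u t p) ` ({0..T} \<times> UNIV))"
    and continuous: "continuous_on ({0..T} \<times> UNIV) (\<lambda>(t,p). u t p)"
    and deriv_t: "\<And>t p. t \<in> {0<..<T} \<Longrightarrow> ((\<lambda>s. u s p) has_real_derivative ut t p) (at t)"
    and deriv_p: "\<And>t p. t \<in> {0..T} \<Longrightarrow> ((\<lambda>q. u t q) has_real_derivative up t p) (at p)"
    and deriv_pp: "\<And>t p. t \<in> {0..T} \<Longrightarrow> ((\<lambda>q. up t q) has_real_derivative upp t p) (at p)"
begin

lemma bound_nonneg:
  assumes "\<And>t p. t \<in> {0..T} \<Longrightarrow> \<bar>u t p\<bar> \<le> M"
  shows "0 \<le> M"
  using assms[of T 0] T_pos by fastforce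

lemma penalized_attains_max:
  assumes M: "\<And>t p. t \<in> {0..T} \<Longrightarrow> \<bar>u t p\<bar> \<le> M"
    and s: "s \<in> {0..T}" and \<epsilon>: "0 < \<epsilon>" and \<eta>: "0 \<le> \<eta>"
  obtains t\<^sub>0 p\<^sub>0 where "t\<^sub>0 \<in> {s..T}"
    and "\<And>t p. t \<in> {s..T} \<Longrightarrow>
           u t p - \<eta>*(T - t) - \<epsilon>*p^2 \<le> u t\<^sub>0 p\<^sub>0 - \<eta>*(T - t\<^sub>0) - \<epsilon>*p\<^sub>0^2"
proof -
  define z where "z x = u (fst x) (snd x) - \<eta>*(T - fst x) - \<epsilon>*(snd x)^2" for x
  have M0: "0 \<le> M"
    using M by (rule bound_nonneg)
  define R where "R = sqrt (2*M/\<epsilon>) + 1"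
  define K where "K = {s..T} \<times> {-R..R}"
  have "0 < R"
    using M0 \<epsilon> by (simp add: R_def add_nonneg_pos)
  then have TK: "(T, 0) \<in> K"
    using s by (auto simp: K_def)
  have "continuous_on ({0..T} \<times> UNIV) z"
    using continuous unfolding z_def case_prod_beta' by (intro continuous_intros)
  then have "continuous_on K z"
    by (rule continuous_on_subset) (use s in \<open>auto simp: K_def\<close>)
  then obtain x\<^sub>0 where x\<^sub>0: "x\<^sub>0 \<in> K" "\<And>y. y \<in> K \<Longrightarrow> z y \<le> z x\<^sub>0"
    using continuous_attains_sup[of K z] TK unfolding K_def by (blast intro: compact_Times)
  \<comment> \<open>outside \<open>K\<close> the penalty exceeds \<open>2M\<close>, so \<open>z\<close> is there below \<open>z(T,0) \<ge> -M\<close>\<close>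
  have "z y \<le> z x\<^sub>0" if y: "y \<in> {s..T} \<times> UNIV" for y
  proof (cases "\<bar>snd y\<bar> \<le> R")
    case True
    then show ?thesis
      using x\<^sub>0(2)[of y] y by (cases y) (auto simp: K_def abs_le_iff)
  next
    case False
    then have "sqrt (2*M/\<epsilon>)^2 < \<bar>snd y\<bar>^2"
      using M0 \<epsilon> by (intro power_strict_mono) (auto simp: R_def)
    then have "2*M < \<epsilon>*(snd y)^2"
      using M0 \<epsilon> by (simp add: field_simps)
    moreover have "u (fst y) (snd y) \<le> M" "-M \<le> u T 0" "0 \<le> \<eta>*(T - fst y)"
      using M[of "fst y" "snd y"] M[of T 0] y s \<eta> by (auto simp: abs_le_iff)
    ultimately have "z y < z (T, 0)"
      unfolding z_def by simp
    then show ?thesis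
      using x\<^sub>0(2)[OF TK] by linarith
  qed
  then show thesis
    using that[of "fst x\<^sub>0" "snd x\<^sub>0"] x\<^sub>0(1) unfolding K_def z_def by fastforce
qed

lemma penalized_max_not_interior:
  assumes sub: "\<And>t p. t \<in> {0<..<T} \<Longrightarrow> 0 \<le> ut t p + 1/2*\<sigma>^2*upp t p + C*(up t p)^2"
    and t\<^sub>0: "t\<^sub>0 \<in> {0<..<T}" and \<epsilon>: "0 < \<epsilon>" and \<eta>: "\<epsilon>*(\<sigma>^2 + 4*\<bar>C\<bar>*M) < \<eta>"
    and max: "\<And>t p. t \<in> {t\<^sub>0..T} \<Longrightarrow>
                u t p - \<eta>*(T - t) - \<epsilon>*p^2 \<le> u t\<^sub>0 p\<^sub>0 - \<eta>*(T - t\<^sub>0) - \<epsilon>*p\<^sub>0^2"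
    and small: "\<epsilon>*p\<^sub>0^2 \<le> M"
  shows False
proof -
  define z where "z t p = u t p - \<eta>*(T - t) - \<epsilon>*p^2" for t p
  have t\<^sub>0': "t\<^sub>0 \<in> {0..T}"
    using t\<^sub>0 by simp
  have "z t\<^sub>0 q \<le> z t\<^sub>0 p\<^sub>0" for q
    using max t\<^sub>0 unfolding z_def by simp
  moreover have "((\<lambda>q. z t\<^sub>0 q) has_real_derivative up t\<^sub>0 q - 2*\<epsilon>*q) (at q)" for q
    unfolding z_def using deriv_p[OF t\<^sub>0'] by (auto intro!: derivative_eq_intros)
  moreover have "((\<lambda>q. up t\<^sub>0 q - 2*\<epsilon>*q) has_real_derivative upp t\<^sub>0 p\<^sub>0 - 2*\<epsilon>) (at p\<^sub>0)"
    using deriv_pp[OF t\<^sub>0'] by (auto intro!: derivative_eq_intros)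
  ultimately have "up t\<^sub>0 p\<^sub>0 - 2*\<epsilon>*p\<^sub>0 = 0" and "upp t\<^sub>0 p\<^sub>0 - 2*\<epsilon> \<le> 0"
    by (rule DERIV_second_nonpos_at_max)+
  then have up: "up t\<^sub>0 p\<^sub>0 = 2*\<epsilon>*p\<^sub>0" and upp: "upp t\<^sub>0 p\<^sub>0 \<le> 2*\<epsilon>"
    by simp_all
  have "((\<lambda>t. z t p\<^sub>0) has_real_derivative ut t\<^sub>0 p\<^sub>0 + \<eta>) (at t\<^sub>0)"
    unfolding z_def using deriv_t[OF t\<^sub>0] by (auto intro!: derivative_eq_intros)
  then have ut: "ut t\<^sub>0 p\<^sub>0 + \<eta> \<le> 0"
    by (rule DERIV_nonpos_at_left_max[where T=T, rotated 2]) (use max t\<^sub>0 in \<open>auto simp: z_def\<close>)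
  have "1/2*\<sigma>^2*upp t\<^sub>0 p\<^sub>0 \<le> \<sigma>^2*\<epsilon>"
    using mult_left_mono[OF upp, of "\<sigma>^2/2"] by simp
  moreover have "C*(up t\<^sub>0 p\<^sub>0)^2 \<le> \<bar>C\<bar>*(up t\<^sub>0 p\<^sub>0)^2"
    by (simp add: mult_right_mono)
  moreover have "\<bar>C\<bar>*(up t\<^sub>0 p\<^sub>0)^2 = 4*\<bar>C\<bar>*\<epsilon>*(\<epsilon>*p\<^sub>0^2)"
    using up by (simp add: power2_eq_square)
  moreover have "4*\<bar>C\<bar>*\<epsilon>*(\<epsilon>*p\<^sub>0^2) \<le> 4*\<bar>C\<bar>*\<epsilon>*M"
    using small \<epsilon> by (intro mult_left_mono) auto
  ultimately show False
    using sub[OF t\<^sub>0, of p\<^sub>0] ut \<eta> by (simp add: algebra_simps)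
qed

lemma subsolution_penalized_bound:
  assumes sub: "\<And>t p. t \<in> {0<..<T} \<Longrightarrow> 0 \<le> ut t p + 1/2*\<sigma>^2*upp t p + C*(up t p)^2"
    and terminal: "\<And>p. u T p \<le> 0"
    and M: "\<And>t p. t \<in> {0..T} \<Longrightarrow> \<bar>u t p\<bar> \<le> M"
    and s: "s \<in> {0<..T}" and \<epsilon>: "0 < \<epsilon>" and t: "t \<in> {s..T}"
  shows "u t p \<le> \<epsilon>*(\<sigma>^2 + 4*\<bar>C\<bar>*M + 1)*(T - t) + \<epsilon>*p^2"
proof -
  define \<eta> where "\<eta> = \<epsilon>*(\<sigma>^2 + 4*\<bar>C\<bar>*M + 1)"
  define z where "z t p = u t p - \<eta>*(T - t) - \<epsilon>*p^2" for t p
  have \<eta>: "0 \<le> \<eta>" "\<epsilon>*(\<sigma>^2 + 4*\<bar>C\<bar>*M) < \<eta>"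
    using \<epsilon> bound_nonneg[OF M] by (simp_all add: \<eta>_def algebra_simps)
  obtain t\<^sub>0 p\<^sub>0 where t\<^sub>0: "t\<^sub>0 \<in> {s..T}"
    and max: "\<And>t p. t \<in> {s..T} \<Longrightarrow> z t p \<le> z t\<^sub>0 p\<^sub>0"
    using penalized_attains_max[OF M _ \<epsilon> \<eta>(1), of s] s unfolding z_def by auto
  have "z t\<^sub>0 p\<^sub>0 \<le> 0"
  proof (rule ccontr)
    assume pos: "\<not> z t\<^sub>0 p\<^sub>0 \<le> 0"
    have "u t\<^sub>0 p\<^sub>0 \<le> M" "0 \<le> \<eta>*(T - t\<^sub>0)" "0 \<le> \<epsilon>*p\<^sub>0^2"
      using M[of t\<^sub>0 p\<^sub>0] t\<^sub>0 s \<eta> \<epsilon> by auto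
    then have "\<epsilon>*p\<^sub>0^2 \<le> M" and "t\<^sub>0 \<noteq> T"
      using pos terminal[of p\<^sub>0] unfolding z_def by auto
    moreover have "z t p \<le> z t\<^sub>0 p\<^sub>0" if "t \<in> {t\<^sub>0..T}" for t p
      using max that t\<^sub>0 by auto
    moreover have "t\<^sub>0 \<in> {0<..<T}"
      using \<open>t\<^sub>0 \<noteq> T\<close> t\<^sub>0 s by auto
    ultimately show False
      using penalized_max_not_interior[OF sub _ \<epsilon> \<eta>(2), of t\<^sub>0 p\<^sub>0] unfolding z_def by blast
  qed
  then show ?thesis
    using max[OF t, of p] unfolding z_def \<eta>_def by simp
qed

theorem subsolution_maximum_principle:
  assumes sub: "\<And>t p. t \<in> {0<..<T} \<Longrightarrow> 0 \<le> ut t p + 1/2*\<sigma>^2*upp t p + C*(up t p)^2"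
    and terminal: "\<And>p. u T p \<le> 0"
    and t: "t \<in> {0..T}"
  shows "u t p \<le> 0"
proof -
  obtain M where M: "\<And>t p. t \<in> {0..T} \<Longrightarrow> \<bar>u t p\<bar> \<le> M"
    using bounded unfolding bounded_real by fastforce
  then have M0: "0 \<le> M"
    by (rule bound_nonneg)
  define K where "K = \<sigma>^2 + 4*\<bar>C\<bar>*M + 1"
  have "u t p \<le> 0" if t: "t \<in> {0<..T}" for t p
  proof (rule field_le_epsilon)
    fix e :: real
    assume "0 < e"
    define D where "D = K*(T - t) + p^2 + 1"
    have "0 < D"
      using t M0 by (simp add: D_def K_def add_nonneg_pos)
    define \<epsilon> where "\<epsilon> = e/D"
    have "u t p \<le> \<epsilon>*K*(T - t) + \<epsilon>*p^2"
      using subsolution_penalized_bound[OF sub terminal M t, of \<epsilon> t p] t \<open>0 < e\<close> \<open>0 < D\<close>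
      by (simp add: K_def \<epsilon>_def)
    also have "\<dots> = \<epsilon>*D - \<epsilon>"
      by (simp add: D_def algebra_simps)
    also have "\<dots> \<le> e"
      using \<open>0 < D\<close> \<open>0 < e\<close> by (simp add: \<epsilon>_def)
    finally show "u t p \<le> 0 + e"
      by simp
  qed
  moreover have "continuous_on {0..T} (\<lambda>t. u t p)"
    by (rule continuous_on_compose2[OF continuous, of _ "\<lambda>t. (t, p)", simplified])
      (auto intro!: continuous_intros)
  ultimately show ?thesis
    using continuous_le_on_closure[of "{0<..T}" "\<lambda>t. u t p" t 0] t T_pos by auto
qed

lemma uminus:
  "bounded_C12_function T (\<lambda>t p. - u t p) (\<lambda>t p. - ut t p) (\<lambda>t p. - up t p) (\<lambda>t p. - upp t p)"
proof
  have "(\<lambda>(t, p). - u t p) = (\<lambda>x. - (\<lambda>(t, p). u t p) x)"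
    by auto
  then show "bounded ((\<lambda>(t, p). - u t p) ` ({0..T} \<times> UNIV))"
    and "continuous_on ({0..T} \<times> UNIV) (\<lambda>(t, p). - u t p)"
    using bounded continuous by (auto intro: continuous_on_minus)
qed (use T_pos deriv_t deriv_p deriv_pp in \<open>auto intro!: derivative_eq_intros\<close>)

lemma solution_vanishes:
  assumes eq: "\<And>t p. t \<in> {0<..<T} \<Longrightarrow> ut t p + 1/2*\<sigma>^2*upp t p + C*(up t p)^2 = 0"
    and terminal: "\<And>p. u T p = 0"
    and t: "t \<in> {0..T}"
  shows "u t p = 0" and "up t p = 0"
proof -
  interpret neg: bounded_C12_function T "\<lambda>t p. - u t p" "\<lambda>t p. - ut t p" "\<lambda>t p. - up t p"
      "\<lambda>t p. - upp t p"
    by (rule uminus)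
  have "u t q \<le> 0" for q
    by (rule subsolution_maximum_principle[where \<sigma>=\<sigma> and C=C]) (use eq terminal t in auto)
  moreover have "- u t q \<le> 0" for q
  proof (rule neg.subsolution_maximum_principle[where \<sigma>=\<sigma> and C="- C"])
    show "0 \<le> - ut s r + 1/2*\<sigma>^2*(- upp s r) + - C*(- up s r)^2" if "s \<in> {0<..<T}" for s r
      using eq[OF that, of r] by simp
  qed (use terminal t in auto)
  ultimately have zero: "u t = (\<lambda>q. 0)"
    by (intro ext antisym) auto
  then show "u t p = 0"
    by simp
  show "up t p = 0"
    using deriv_p[OF t, of p] DERIV_const DERIV_unique unfolding zero by blast
qed

end

lemma bounded_C12_function_sum:
  assumes "0 < T" and "finite I"
    and "\<And>i. i \<in> I \<Longrightarrow> bounded_C12_function T (u i) (ut i) (up i) (upp i)"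
  shows "bounded_C12_function T (\<lambda>t p. \<Sum>i\<in>I. u i t p) (\<lambda>t p. \<Sum>i\<in>I. ut i t p)
           (\<lambda>t p. \<Sum>i\<in>I. up i t p) (\<lambda>t p. \<Sum>i\<in>I. upp i t p)"
proof -
  have "(\<lambda>(t, p). \<Sum>i\<in>I. u i t p) = (\<lambda>x. \<Sum>i\<in>I. (\<lambda>(t, p). u i t p) x)"
    by auto
  then show ?thesis
    using assms unfolding bounded_C12_function_def
    by (auto intro!: bounded_sum_comp continuous_on_sum DERIV_sum)
qed

lemma sum_Xdot_eq_Xstar: "(\<Sum>j=1..N. Xdot N lam kap vp j t p) = Xstar N lam kap vp t p"
proof -
  have "(\<Sum>j=1..N. Xdot N lam kap vp j t p)
      = lam / kap * ((\<Sum>i=1..N. vp i t p) - real N * (1 / (real N + 1) * (\<Sum>i=1..N. vp i t p)))"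
    unfolding Xdot_def
    by (simp only: sum_distrib_left[symmetric] sum_subtractf sum_constant card_atLeastAtMost) simp
  also have "\<dots> = Xstar N lam kap vp t p"
    unfolding Xstar_def by (simp add: field_simps)
  finally show ?thesis .
qed

lemma sum_equilibrium_pde:
  fixes N :: nat and lam kap \<sigma> :: real and vt vp vpp :: "nat \<Rightarrow> real \<Rightarrow> real \<Rightarrow> real"
  defines "c \<equiv> lam / (kap * (real N + 1))"
  shows "(\<Sum>j=1..N. vt j t p + 1/2*\<sigma>^2* vpp j t p + lam * Xstar N lam kap vp t p * vp j t p
                    - kap * Xdot N lam kap vp j t p * Xstar N lam kap vp t p)
       = (\<Sum>j=1..N. vt j t p) + 1/2*\<sigma>^2*(\<Sum>j=1..N. vpp j t p)
         + (lam*c - kap*c^2) * (\<Sum>j=1..N. vp j t p)^2"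
proof -
  have "Xstar N lam kap vp t p = c * (\<Sum>j=1..N. vp j t p)"
    unfolding Xstar_def c_def ..
  moreover have "(\<Sum>j=1..N. vt j t p + 1/2*\<sigma>^2 * vpp j t p + lam * Xstar N lam kap vp t p * vp j t p
                    - kap * Xdot N lam kap vp j t p * Xstar N lam kap vp t p)
      = (\<Sum>j=1..N. vt j t p) + 1/2*\<sigma>^2*(\<Sum>j=1..N. vpp j t p)
        + lam * Xstar N lam kap vp t p * (\<Sum>j=1..N. vp j t p)
        - kap * (\<Sum>j=1..N. Xdot N lam kap vp j t p) * Xstar N lam kap vp t p"
    by (simp add: sum.distrib sum_subtractf sum_distrib_left sum_distrib_right)
  ultimately show ?thesis
    unfolding sum_Xdot_eq_Xstar by (simp add: power2_eq_square algebra_simps)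
qed

theorem mainTheorem5:
  fixes N :: nat and T \<sigma> lam kap :: real
    and H H1 H2 :: "nat \<Rightarrow> real \<Rightarrow> real"
    and v vt vp vpp :: "nat \<Rightarrow> real \<Rightarrow> real \<Rightarrow> real"
  assumes N: "N \<ge> 1" and T: "T > 0" and sig: "\<sigma> > 0" and lam: "lam > 0" and kap: "kap > 0"
    and H_C2b: "\<And>j. j \<in> {1..N} \<Longrightarrow> C2b (H j) (H1 j) (H2 j)"
    and H_sum: "\<And>p. (\<Sum>i=1..N. H i p) = 0"
    and v_t: "\<And>j t p. j \<in> {1..N} \<Longrightarrow> t \<in> {0<..<T} \<Longrightarrow>
                ((\<lambda>s. v j s p) has_real_derivative vt j t p) (at t)"
    and v_p: "\<And>j t p. j \<in> {1..N} \<Longrightarrow> t \<in> {0..T} \<Longrightarrow>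
                ((\<lambda>q. v j t q) has_real_derivative vp j t p) (at p)"
    and v_pp: "\<And>j t p. j \<in> {1..N} \<Longrightarrow> t \<in> {0..T} \<Longrightarrow>
                ((\<lambda>q. vp j t q) has_real_derivative vpp j t p) (at p)"
    and cont_v: "\<And>j. j \<in> {1..N} \<Longrightarrow> continuous_on ({0..T} \<times> UNIV) (\<lambda>(t,p). v j t p)"
    and cont_vp: "\<And>j. j \<in> {1..N} \<Longrightarrow> continuous_on ({0..T} \<times> UNIV) (\<lambda>(t,p). vp j t p)"
    and cont_vpp: "\<And>j. j \<in> {1..N} \<Longrightarrow> continuous_on ({0..T} \<times> UNIV) (\<lambda>(t,p). vpp j t p)"
    and cont_vt: "\<And>j. j \<in> {1..N} \<Longrightarrow> continuous_on ({0<..<T} \<times> UNIV) (\<lambda>(t,p). vt j t p)"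
    and bnd_v: "\<And>j. j \<in> {1..N} \<Longrightarrow> bounded ((\<lambda>(t,p). v j t p) ` ({0..T} \<times> UNIV))"
    and bnd_vp: "\<And>j. j \<in> {1..N} \<Longrightarrow> bounded ((\<lambda>(t,p). vp j t p) ` ({0..T} \<times> UNIV))"
    and bnd_vpp: "\<And>j. j \<in> {1..N} \<Longrightarrow> bounded ((\<lambda>(t,p). vpp j t p) ` ({0..T} \<times> UNIV))"
    and pde: "\<And>j t p. j \<in> {1..N} \<Longrightarrow> t \<in> {0<..<T} \<Longrightarrow>
                0 = vt j t p + 1/2 * \<sigma>^2 * vpp j t p
                    + lam * Xstar N lam kap vp t p * vp j t p
                    - kap * Xdot N lam kap vp j t p * Xstar N lam kap vp t p"
    and terminal: "\<And>j p. j \<in> {1..N} \<Longrightarrow> v j T p = H j p"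
  shows "\<forall>t\<in>{0..T}. \<forall>p. (\<Sum>i=1..N. Xdot N lam kap vp i t p) = 0"
proof -
  define c where "c = lam / (kap * (real N + 1))"
  interpret w: bounded_C12_function T "\<lambda>t p. \<Sum>i=1..N. v i t p" "\<lambda>t p. \<Sum>i=1..N. vt i t p"
      "\<lambda>t p. \<Sum>i=1..N. vp i t p" "\<lambda>t p. \<Sum>i=1..N. vpp i t p"
    by (rule bounded_C12_function_sum)
      (use T bnd_v cont_v v_t v_p v_pp in \<open>auto simp: bounded_C12_function_def\<close>)
  have "(\<Sum>i=1..N. vt i t p) + 1/2*\<sigma>^2*(\<Sum>i=1..N. vpp i t p)
          + (lam*c - kap*c^2) * (\<Sum>i=1..N. vp i t p)^2 = 0" if "t \<in> {0<..<T}" for t p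
  proof -
    have "(\<Sum>j=1..N. vt j t p + 1/2 * \<sigma>^2 * vpp j t p + lam * Xstar N lam kap vp t p * vp j t p
                    - kap * Xdot N lam kap vp j t p * Xstar N lam kap vp t p) = 0"
      by (intro sum.neutral ballI) (rule pde[OF _ that, symmetric])
    then show ?thesis
      unfolding sum_equilibrium_pde c_def .
  qed
  moreover have "(\<Sum>i=1..N. v i T p) = 0" for p
    using H_sum[of p] terminal by simp
  ultimately have "(\<Sum>i=1..N. vp i t p) = 0" if "t \<in> {0..T}" for t p
    using w.solution_vanishes(2) that by blast
  then show ?thesis
    unfolding sum_Xdot_eq_Xstar Xstar_def by simp
qed

end
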